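(* Let $G=(U,V,E)$ be a bipartite graph, let $Y \subseteq V$, and let $X \subseteq U$ be such that $X$ is contained in some minimum-cardinality vertex cover of $G \setminus Y$. Then $X$ is contained in some minimum-cardinality vertex cover of $G$.
   Context: $G=(U,V,E)$ denotes a bipartite graph with vertex set $U\cup V$ and every edge having one end in $U$ and the other in $V$. $G\setminus Y$ denotes the graph obtained by deleting the vertices of $Y$. A vertex cover is a set of vertices incident to all edges. *)

theory Defs
  imports Main
begin

definition bipartite :: "'a set \<Rightarrow> 'a set \<Rightarrow> ('a \<times> 'a) set \<Rightarrow> bool" where
  "bipartite U V E \<longleftrightarrow> finite U \<and> finite V \<and> U \<inter> V = {} \<and> E \<subseteq> U \<times> V"

definition vertex_cover :: "'a set \<Rightarrow> 'a set \<Rightarrow> ('a \<times> 'a) set \<Rightarrow> 'a set \<Rightarrow> bool" where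
  "vertex_cover U V E C \<longleftrightarrow> C \<subseteq> U \<union> V \<and> (\<forall>(u, v) \<in> E. u \<in> C \<or> v \<in> C)"

definition min_vertex_cover :: "'a set \<Rightarrow> 'a set \<Rightarrow> ('a \<times> 'a) set \<Rightarrow> 'a set \<Rightarrow> bool" where
  "min_vertex_cover U V E C \<longleftrightarrow> vertex_cover U V E C \<and>
     (\<forall>C'. vertex_cover U V E C' \<longrightarrow> card C \<le> card C')"

text \<open>Edge set of G \<setminus> Y: edges with no endpoint in Y (vertex classes become U - Y, V - Y).\<close>
definition del_edges :: "('a \<times> 'a) set \<Rightarrow> 'a set \<Rightarrow> ('a \<times> 'a) set" where
  "del_edges E Y = {(u, v) \<in> E. u \<notin> Y \<and> v \<notin> Y}"

end

theory Submission
  imports Defs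
begin

text \<open>Choose a minimum vertex cover C of G and extend the given cover C' of G \<setminus> Y to the cover
  D = C' \<union> Y of G. Merging C and D by taking the union on the U-side and the intersection on the
  V-side, and vice versa, yields two vertex covers whose sizes add up to |C| + |D|. The second one
  contains Y and restricts to a cover of G \<setminus> Y, so it is at least as large as D; hence the first one
  is at most as large as C, i.e. a minimum cover, and it contains X \<subseteq> C' \<inter> U.\<close>

definition merge_on :: "'a set \<Rightarrow> 'a set \<Rightarrow> 'a set \<Rightarrow> 'a set" where
  "merge_on W C D = ((C \<union> D) \<inter> W) \<union> ((C \<inter> D) - W)"

lemma card_merge_on_add:
  assumes "finite C" "finite D"
  shows "card (merge_on W C D) + card (merge_on (- W) C D) = card C + card D"
proof -
  have merge_split: "card (merge_on W' C D) = card ((C \<union> D) \<inter> W') + card ((C \<inter> D) - W')"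
    for W' unfolding merge_on_def by (rule card_Un_disjoint) (use assms in auto)
  have inside: "card ((C \<union> D) \<inter> W) + card ((C \<inter> D) \<inter> W) = card (C \<inter> W) + card (D \<inter> W)"
  proof -
    have "(C \<union> D) \<inter> W = (C \<inter> W) \<union> (D \<inter> W)" "(C \<inter> D) \<inter> W = (C \<inter> W) \<inter> (D \<inter> W)" by auto
    then show ?thesis using card_Un_Int[of "C \<inter> W" "D \<inter> W"] assms by simp
  qed
  have outside: "card ((C \<union> D) - W) + card ((C \<inter> D) - W) = card (C - W) + card (D - W)"
  proof -
    have "(C \<union> D) - W = (C - W) \<union> (D - W)" "(C \<inter> D) - W = (C - W) \<inter> (D - W)" by auto
    then show ?thesis using card_Un_Int[of "C - W" "D - W"] assms by simp
  qed
  have "card (merge_on (- W) C D) = card ((C \<union> D) - W) + card ((C \<inter> D) \<inter> W)"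
    using merge_split[of "- W"] by (simp add: Diff_eq)
  then show ?thesis
    using merge_split[of W] inside outside card_Int_Diff[OF assms(1), of W]
      card_Int_Diff[OF assms(2), of W] by linarith
qed

lemma vertex_cover_merge_on:
  assumes "\<forall>(u, v) \<in> E. u \<in> W \<longleftrightarrow> v \<notin> W"
    and "vertex_cover U V E C" "vertex_cover U V E D"
  shows "vertex_cover U V E (merge_on W C D)"
  using assms unfolding vertex_cover_def merge_on_def by fast

lemma min_vertex_cover_merge_on:
  assumes "\<forall>(u, v) \<in> E. u \<in> W \<longleftrightarrow> v \<notin> W" "finite (U \<union> V)"
    and "min_vertex_cover U V E C" "vertex_cover U V E D"
    and "card D \<le> card (merge_on (- W) C D)"
  shows "min_vertex_cover U V E (merge_on W C D)"
proof -
  have covers: "vertex_cover U V E C" "vertex_cover U V E (merge_on W C D)"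
    using assms vertex_cover_merge_on[of E W] by (auto simp: min_vertex_cover_def)
  have "finite C" "finite D"
    using covers(1) assms(2,4) by (auto simp: vertex_cover_def intro: finite_subset)
  then have "card (merge_on W C D) \<le> card C"
    using card_merge_on_add[of C D W] assms(5) by linarith
  then show ?thesis
    using assms(3) covers(2) unfolding min_vertex_cover_def by fastforce
qed

lemma min_vertex_cover_exists:
  assumes "finite (U \<union> V)" "E \<subseteq> U \<times> V"
  shows "\<exists>C. min_vertex_cover U V E C"
proof -
  have "vertex_cover U V E (U \<union> V)"
    using assms(2) unfolding vertex_cover_def by auto
  then show ?thesis
    using ex_has_least_nat[of "vertex_cover U V E" "U \<union> V" card]
    unfolding min_vertex_cover_def by blast
qed

lemma vertex_cover_del_edges:
  "vertex_cover U V E C \<Longrightarrow> vertex_cover (U - Y) (V - Y) (del_edges E Y) (C - Y)"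
  unfolding vertex_cover_def del_edges_def by fast

lemma vertex_cover_Un_deleted:
  "vertex_cover (U - Y) (V - Y) (del_edges E Y) C \<Longrightarrow> Y \<subseteq> U \<union> V \<Longrightarrow>
    vertex_cover U V E (C \<union> Y)"
  unfolding vertex_cover_def del_edges_def by fast

lemma card_min_vertex_cover_del_edges:
  assumes "min_vertex_cover (U - Y) (V - Y) (del_edges E Y) C'" "finite (U \<union> V)" "Y \<subseteq> U \<union> V"
  shows "card (C' \<union> Y) = card C' + card Y"
proof -
  have "C' \<subseteq> U \<union> V - Y"
    using assms(1) by (auto simp: min_vertex_cover_def vertex_cover_def)
  then show ?thesis
    using assms(2,3) by (intro card_Un_disjoint) (auto intro: finite_subset)
qed

lemma card_le_vertex_cover_containing_deleted:
  assumes "min_vertex_cover (U - Y) (V - Y) (del_edges E Y) C'"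
    and "vertex_cover U V E M" "Y \<subseteq> M" "finite M"
  shows "card C' + card Y \<le> card M"
proof -
  have "card C' \<le> card (M - Y)"
    using assms(1) vertex_cover_del_edges[OF assms(2)] by (auto simp: min_vertex_cover_def)
  moreover have "card M = card (M - Y) + card Y"
    using assms(3,4) by (metis card_Diff_subset card_mono diff_add finite_subset)
  ultimately show ?thesis by linarith
qed

theorem lemma6:
  fixes U V :: "'a set" and E :: "('a \<times> 'a) set" and X Y :: "'a set"
  assumes "bipartite U V E"
    and "Y \<subseteq> V"
    and "X \<subseteq> U"
    and "\<exists>C. min_vertex_cover (U - Y) (V - Y) (del_edges E Y) C \<and> X \<subseteq> C"
  shows "\<exists>C. min_vertex_cover U V E C \<and> X \<subseteq> C"
proof -
  have fin: "finite (U \<union> V)" and edges: "E \<subseteq> U \<times> V" and disj: "U \<inter> V = {}"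
    using assms(1) by (auto simp: bipartite_def)
  then have sides: "\<forall>(u, v) \<in> E. u \<in> U \<longleftrightarrow> v \<notin> U" by auto
  obtain C' where C': "min_vertex_cover (U - Y) (V - Y) (del_edges E Y) C'" and "X \<subseteq> C'"
    using assms(4) by blast
  obtain C where C: "min_vertex_cover U V E C"
    using min_vertex_cover_exists[OF fin edges] by blast
  define D where "D = C' \<union> Y"
  have D: "vertex_cover U V E D"
    unfolding D_def using C' assms(2) by (intro vertex_cover_Un_deleted) (auto simp: min_vertex_cover_def)
  have M: "vertex_cover U V E (merge_on (- U) C D)"
    using sides C D by (intro vertex_cover_merge_on) (auto simp: min_vertex_cover_def)
  have "card D = card C' + card Y"
    unfolding D_def using card_min_vertex_cover_del_edges[OF C' fin] assms(2) by (metis le_supI2)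
  also have "\<dots> \<le> card (merge_on (- U) C D)"
  proof (rule card_le_vertex_cover_containing_deleted[OF C' M])
    show "Y \<subseteq> merge_on (- U) C D"
      using assms(2) disj unfolding merge_on_def D_def by auto
    show "finite (merge_on (- U) C D)"
      using M fin by (auto simp: vertex_cover_def intro: finite_subset)
  qed
  finally have "card D \<le> card (merge_on (- U) C D)" .
  then have "min_vertex_cover U V E (merge_on U C D)"
    by (rule min_vertex_cover_merge_on[OF sides fin C D])
  moreover have "X \<subseteq> merge_on U C D"
    using \<open>X \<subseteq> C'\<close> assms(3) unfolding merge_on_def D_def by auto
  ultimately show ?thesis by blast
qed

end
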